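(* Let $S$ be an expanding automaton semigroup and $H$ a subgroup of $S$ (a subsemigroup of $S$ which is a group, possibly with identity different from any identity of $S$). Then there is a self-similar group $G$ such that $H$ is isomorphic to a subgroup of $G$.
   Context: An expanding automaton is a quadruple $(Q,\Sigma,t,o)$ with $Q$ a finite set of states, $\Sigma$ a finite alphabet, $t:Q\times\Sigma\to Q$ and $o:Q\times\Sigma\to\Sigma^+$. Each state $q$ induces $q:\Sigma^*\to\Sigma^*$ by $q(\emptyset)=\emptyset$, $q(\sigma w)=o(q,\sigma)\,q'(w)$ with $q'=t(q,\sigma)$; an expanding automaton semigroup is the semigroup of maps generated under composition by the states. A self-similar group is the group generated by the states of an invertible synchronous automaton (output in $\Sigma$, $o(q,\cdot)$ a permutation of $\Sigma$ for each $q$) with possibly infinitely many states. *)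

theory Defs
  imports "HOL-Algebra.Group"
begin

fun run :: "('q \<Rightarrow> 'a \<Rightarrow> 'q) \<Rightarrow> ('q \<Rightarrow> 'a \<Rightarrow> 'a list) \<Rightarrow> 'q \<Rightarrow> 'a list \<Rightarrow> 'a list" where
  "run tr out q [] = []"
| "run tr out q (a # w) = out q a @ run tr out (tr q a) w"

text \<open>The map on words over the alphabet Al induced by state q (words outside Al* are
  left fixed, so that maps are compared only by their behaviour on Al*).\<close>
definition state_map :: "'a set \<Rightarrow> ('q \<Rightarrow> 'a \<Rightarrow> 'q) \<Rightarrow> ('q \<Rightarrow> 'a \<Rightarrow> 'a list) \<Rightarrow> 'q \<Rightarrow> 'a list \<Rightarrow> 'a list" where
  "state_map Al tr out q = (\<lambda>w. if w \<in> lists Al then run tr out q w else w)"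

definition expanding_automaton :: "'a set \<Rightarrow> 'q set \<Rightarrow> ('q \<Rightarrow> 'a \<Rightarrow> 'q) \<Rightarrow> ('q \<Rightarrow> 'a \<Rightarrow> 'a list) \<Rightarrow> bool" where
  "expanding_automaton Al Q tr out \<longleftrightarrow> finite Al \<and> finite Q \<and>
     (\<forall>q\<in>Q. \<forall>a\<in>Al. tr q a \<in> Q \<and> out q a \<noteq> [] \<and> set (out q a) \<subseteq> Al)"

inductive_set semigroup_closure :: "('b \<Rightarrow> 'b) set \<Rightarrow> ('b \<Rightarrow> 'b) set" for X where
  gen: "f \<in> X \<Longrightarrow> f \<in> semigroup_closure X"
| comp: "f \<in> semigroup_closure X \<Longrightarrow> g \<in> semigroup_closure X \<Longrightarrow> f \<circ> g \<in> semigroup_closure X"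

definition automaton_semigroup :: "'a set \<Rightarrow> 'q set \<Rightarrow> ('q \<Rightarrow> 'a \<Rightarrow> 'q) \<Rightarrow> ('q \<Rightarrow> 'a \<Rightarrow> 'a list) \<Rightarrow> ('a list \<Rightarrow> 'a list) set" where
  "automaton_semigroup Al Q tr out = semigroup_closure (state_map Al tr out ` Q)"

inductive_set group_closure :: "('b \<Rightarrow> 'b) set \<Rightarrow> ('b \<Rightarrow> 'b) set" for X where
  ident: "id \<in> group_closure X"
| gen: "f \<in> X \<Longrightarrow> f \<in> group_closure X"
| comp: "f \<in> group_closure X \<Longrightarrow> g \<in> group_closure X \<Longrightarrow> f \<circ> g \<in> group_closure X"
| inverse: "f \<in> group_closure X \<Longrightarrow> inv_into UNIV f \<in> group_closure X"

text \<open>Invertible synchronous automaton with finite alphabet and possibly infinitely many states: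
  output is a single letter and o(q, _) is a permutation of Al.\<close>
definition invertible_synchronous_automaton :: "'a set \<Rightarrow> 'q set \<Rightarrow> ('q \<Rightarrow> 'a \<Rightarrow> 'q) \<Rightarrow> ('q \<Rightarrow> 'a \<Rightarrow> 'a) \<Rightarrow> bool" where
  "invertible_synchronous_automaton Al Q tr out \<longleftrightarrow> finite Al \<and>
     (\<forall>q\<in>Q. \<forall>a\<in>Al. tr q a \<in> Q) \<and> (\<forall>q\<in>Q. bij_betw (out q) Al Al)"

definition self_similar_group :: "'a set \<Rightarrow> 'q set \<Rightarrow> ('q \<Rightarrow> 'a \<Rightarrow> 'q) \<Rightarrow> ('q \<Rightarrow> 'a \<Rightarrow> 'a) \<Rightarrow> ('a list \<Rightarrow> 'a list) set" where
  "self_similar_group Al Q tr out = group_closure (state_map Al tr (\<lambda>q a. [out q a]) ` Q)"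

definition fun_monoid :: "('b \<Rightarrow> 'b) set \<Rightarrow> ('b \<Rightarrow> 'b) \<Rightarrow> ('b \<Rightarrow> 'b) monoid" where
  "fun_monoid C e = \<lparr>carrier = C, mult = (\<circ>), one = e\<rparr>"

end

theory Submission
  imports Defs
begin

(* Every element of an expanding automaton semigroup is an expanding map of Al*:
   it preserves Al*, is compatible with prefixes, and the image of u v extends the image of u
   by at least |v| letters.  Let H be a group of such maps with identity e.  The prefixes of
   e-fixed words form a subtree P of Al*; every h in H maps P to itself preserving lengths
   (since h^-1 cannot shorten words either) and prefixes, and H acts faithfully on P because
   h = h o e and e maps every word to an e-fixed word.  At a vertex u of P the children of u
   lying outside P are as many as those of h u, so after fixing enumerations of these
   complements the action of h on P extends to an automorphism of the whole tree, acting
   trivially below the first vertex outside P.  Recoding letters as natural numbers yields an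
   injective homomorphism from H into the automorphism group of a finite regular rooted tree,
   and this group is self-similar: its states are all tree automorphisms, with the root
   permutation as output and the residuals (sections) as transitions. *)

subsection \<open>Expanding maps\<close>

definition expanding_map :: "'a set \<Rightarrow> ('a list \<Rightarrow> 'a list) \<Rightarrow> bool" where
  "expanding_map Al s \<longleftrightarrow> (\<forall>w. w \<notin> lists Al \<longrightarrow> s w = w) \<and> (\<forall>w\<in>lists Al. s w \<in> lists Al)
     \<and> s [] = [] \<and> (\<forall>u\<in>lists Al. \<forall>v\<in>lists Al. \<exists>z. s (u @ v) = s u @ z \<and> length v \<le> length z)"

lemma run_lists_length:
  assumes ea: "expanding_automaton Al Q tr out"
  shows "q \<in> Q \<Longrightarrow> w \<in> lists Al \<Longrightarrow> run tr out q w \<in> lists Al \<and> length w \<le> length (run tr out q w)"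
proof (induction w arbitrary: q)
  case Nil then show ?case by simp
next
  case (Cons a w)
  have "tr q a \<in> Q" "out q a \<noteq> []" "set (out q a) \<subseteq> Al"
    using ea Cons.prems unfolding expanding_automaton_def by auto
  with Cons.IH[of "tr q a"] Cons.prems show ?case by (cases "out q a") auto
qed

lemma run_append:
  assumes ea: "expanding_automaton Al Q tr out"
  shows "q \<in> Q \<Longrightarrow> u \<in> lists Al \<Longrightarrow> \<exists>q'\<in>Q. run tr out q (u @ v) = run tr out q u @ run tr out q' v"
proof (induction u arbitrary: q)
  case Nil then show ?case by auto
next
  case (Cons a u)
  have "tr q a \<in> Q" using ea Cons.prems unfolding expanding_automaton_def by auto
  with Cons.IH[of "tr q a"] Cons.prems show ?case by auto
qed

lemma state_map_expanding:
  assumes ea: "expanding_automaton Al Q tr out" and q: "q \<in> Q"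
  shows "expanding_map Al (state_map Al tr out q)"
  unfolding expanding_map_def
proof (intro conjI ballI allI impI)
  fix u v assume u: "u \<in> lists Al" and v: "v \<in> lists Al"
  obtain q' where q': "q' \<in> Q" "run tr out q (u @ v) = run tr out q u @ run tr out q' v"
    using run_append[OF ea q u] by blast
  show "\<exists>z. state_map Al tr out q (u @ v) = state_map Al tr out q u @ z \<and> length v \<le> length z"
    using q' u v run_lists_length[OF ea q'(1) v] unfolding state_map_def by auto
qed (use run_lists_length[OF ea q] in \<open>auto simp: state_map_def\<close>)

lemma expanding_map_comp:
  assumes f: "expanding_map Al f" and g: "expanding_map Al g"
  shows "expanding_map Al (f \<circ> g)"
  unfolding expanding_map_def
proof (intro conjI ballI allI impI)
  fix u v assume u: "u \<in> lists Al" and v: "v \<in> lists Al"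
  obtain z where z: "g (u @ v) = g u @ z" "length v \<le> length z"
    using g u v unfolding expanding_map_def by blast
  have "g (u @ v) \<in> lists Al" using g u v unfolding expanding_map_def by auto
  then have "z \<in> lists Al" "g u \<in> lists Al" using z by auto
  then obtain z' where "f (g u @ z) = f (g u) @ z'" "length z \<le> length z'"
    using f unfolding expanding_map_def by blast
  then show "\<exists>z. (f \<circ> g) (u @ v) = (f \<circ> g) u @ z \<and> length v \<le> length z"
    using z by auto
qed (use f g in \<open>auto simp: expanding_map_def\<close>)

lemma automaton_semigroup_expanding:
  assumes ea: "expanding_automaton Al Q tr out" and f: "f \<in> automaton_semigroup Al Q tr out"
  shows "expanding_map Al f"
  using f unfolding automaton_semigroup_def
  by (induction rule: semigroup_closure.induct)
     (blast intro: expanding_map_comp state_map_expanding[OF ea])+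

subsection \<open>Tree automorphisms form a self-similar group\<close>

definition level_map :: "'b set \<Rightarrow> ('b list \<Rightarrow> 'b list) \<Rightarrow> bool" where
  "level_map A f \<longleftrightarrow> (\<forall>w. w \<notin> lists A \<longrightarrow> f w = w)
     \<and> (\<forall>w\<in>lists A. f w \<in> lists A \<and> length (f w) = length w)
     \<and> (\<forall>u\<in>lists A. \<forall>v\<in>lists A. take (length u) (f (u @ v)) = f u)"

definition tree_automorphism :: "'b set \<Rightarrow> ('b list \<Rightarrow> 'b list) \<Rightarrow> bool" where
  "tree_automorphism A f \<longleftrightarrow> level_map A f \<and> (\<exists>g. level_map A g \<and> (\<forall>w\<in>lists A. g (f w) = w \<and> f (g w) = w))"

text \<open>The permutation of the first level and the section at a letter: these are the output
  and transition functions of the automaton whose states are all tree automorphisms.\<close>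
definition root_letter :: "('b list \<Rightarrow> 'b list) \<Rightarrow> 'b \<Rightarrow> 'b" where
  "root_letter f a = hd (f [a])"

definition residual :: "'b set \<Rightarrow> ('b list \<Rightarrow> 'b list) \<Rightarrow> 'b \<Rightarrow> ('b list \<Rightarrow> 'b list)" where
  "residual A f a = (\<lambda>w. if w \<in> lists A then tl (f (a # w)) else w)"

lemma level_map_lists: "level_map A f \<Longrightarrow> w \<in> lists A \<Longrightarrow> f w \<in> lists A \<and> length (f w) = length w"
  unfolding level_map_def by blast

lemma level_map_prefix:
  "level_map A f \<Longrightarrow> u \<in> lists A \<Longrightarrow> v \<in> lists A \<Longrightarrow> take (length u) (f (u @ v)) = f u"
  unfolding level_map_def by blast

lemma level_map_singleton:
  assumes "level_map A f" "a \<in> A" shows "f [a] = [root_letter f a]"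
proof -
  have "length (f [a]) = 1" using assms unfolding level_map_def by auto
  then show ?thesis unfolding root_letter_def by (cases "f [a]") auto
qed

lemma level_map_Cons:
  assumes f: "level_map A f" and a: "a \<in> A" and w: "w \<in> lists A"
  shows "f (a # w) = root_letter f a # tl (f (a # w))" "root_letter f a \<in> A"
proof -
  have "take 1 (f ([a] @ w)) = f [a]" using level_map_prefix[OF f _ w, of "[a]"] a by simp
  moreover have "length (f (a # w)) = Suc (length w)" using level_map_lists[OF f] a w by simp
  moreover have "f [a] \<in> lists A" using level_map_lists[OF f, of "[a]"] a by simp
  ultimately show "f (a # w) = root_letter f a # tl (f (a # w))" "root_letter f a \<in> A"
    using level_map_singleton[OF f a] by (cases "f (a # w)"; simp)+
qed

lemma level_map_residual:
  assumes f: "level_map A f" and a: "a \<in> A"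
  shows "level_map A (residual A f a)"
  unfolding level_map_def
proof (intro conjI allI impI ballI)
  fix w assume w: "w \<in> lists A"
  have "f (a # w) \<in> lists A" "length (f (a # w)) = Suc (length w)"
    using level_map_lists[OF f] a w by auto
  then show "residual A f a w \<in> lists A" "length (residual A f a w) = length w"
    using w level_map_Cons(1)[OF f a w] unfolding residual_def by (metis Cons_in_lists_iff, simp)
next
  fix u v assume u: "u \<in> lists A" and v: "v \<in> lists A"
  have "take (Suc (length u)) (f (a # u @ v)) = f (a # u)"
    using level_map_prefix[OF f _ v, of "a # u"] u a by simp
  then have "take (length u) (tl (f (a # u @ v))) = tl (f (a # u))"
    by (metis tl_take diff_Suc_1)
  then show "take (length u) (residual A f a (u @ v)) = residual A f a u"
    using u v unfolding residual_def by simp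
qed (simp add: residual_def)

lemma root_letter_inverse:
  assumes f: "level_map A f" and g: "level_map A g" and inv: "\<forall>w\<in>lists A. g (f w) = w"
    and a: "a \<in> A"
  shows "root_letter g (root_letter f a) = a"
proof -
  have "g [root_letter f a] = [a]" using inv level_map_singleton[OF f a] a by (metis lists.simps)
  then show ?thesis unfolding root_letter_def by simp
qed

lemma tree_automorphism_root_bij:
  assumes "tree_automorphism A f" shows "bij_betw (root_letter f) A A"
proof -
  obtain g where g: "level_map A f" "level_map A g" "\<forall>w\<in>lists A. g (f w) = w \<and> f (g w) = w"
    using assms unfolding tree_automorphism_def by blast
  show ?thesis
    by (rule bij_betw_byWitness[where f'="root_letter g"])
       (use g root_letter_inverse[of A f g] root_letter_inverse[of A g f]
            level_map_Cons(2)[OF g(1) _ lists.Nil] level_map_Cons(2)[OF g(2) _ lists.Nil] in auto)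
qed

lemma tree_automorphism_residual:
  assumes "tree_automorphism A f" and a: "a \<in> A" shows "tree_automorphism A (residual A f a)"
proof -
  obtain g where g: "level_map A f" "level_map A g" "\<forall>w\<in>lists A. g (f w) = w \<and> f (g w) = w"
    using assms unfolding tree_automorphism_def by blast
  define b where "b = root_letter f a"
  have b: "b \<in> A" unfolding b_def using level_map_Cons(2)[OF g(1) a lists.Nil] .
  have gb: "root_letter g b = a" unfolding b_def using root_letter_inverse[OF g(1,2)] g(3) a by blast
  have "residual A g b (residual A f a w) = w \<and> residual A f a (residual A g b w) = w"
    if w: "w \<in> lists A" for w
  proof
    have fw: "f (a # w) = b # tl (f (a # w))" using level_map_Cons(1)[OF g(1) a w] b_def by simp
    have gw: "g (b # w) = a # tl (g (b # w))" using level_map_Cons(1)[OF g(2) b w] gb by simp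
    have "tl (f (a # w)) \<in> lists A" "tl (g (b # w)) \<in> lists A"
      using level_map_lists[OF g(1), of "a # w"] level_map_lists[OF g(2), of "b # w"] a b w fw gw
      by (metis Cons_in_lists_iff)+
    then show "residual A g b (residual A f a w) = w" "residual A f a (residual A g b w) = w"
      using w a b g(3) fw gw unfolding residual_def by (metis Cons_in_lists_iff list.sel(3))+
  qed
  then show ?thesis
    unfolding tree_automorphism_def using level_map_residual[OF g(1) a] level_map_residual[OF g(2) b]
    by blast
qed

lemma run_residuals:
  assumes "level_map A f" "w \<in> lists A"
  shows "run (residual A) (\<lambda>q a. [root_letter q a]) f w = f w"
  using assms
proof (induction w arbitrary: f)
  case Nil then show ?case using level_map_lists[of A f "[]"] by simp
next
  case (Cons a w)
  then have "a \<in> A" "w \<in> lists A" by auto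
  with Cons.IH[OF level_map_residual[OF Cons.prems(1)]] level_map_Cons(1)[OF Cons.prems(1)]
  show ?case unfolding residual_def by simp
qed

lemma tree_automorphism_automaton:
  "finite A \<Longrightarrow> invertible_synchronous_automaton A {f. tree_automorphism A f} (residual A) root_letter"
  unfolding invertible_synchronous_automaton_def
  using tree_automorphism_residual tree_automorphism_root_bij by auto

lemma tree_automorphism_in_group:
  assumes "tree_automorphism A f"
  shows "f \<in> self_similar_group A {f. tree_automorphism A f} (residual A) root_letter"
proof -
  have "state_map A (residual A) (\<lambda>q a. [root_letter q a]) f = f"
    using run_residuals[of A f] assms unfolding state_map_def tree_automorphism_def level_map_def
    by fastforce
  then show ?thesis
    unfolding self_similar_group_def using assms by (metis group_closure.gen image_eqI mem_Collect_eq)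
qed

subsection \<open>A group of expanding maps acting on the subtree of fixed prefixes\<close>

locale expanding_group =
  fixes Al :: "'a set" and H :: "('a list \<Rightarrow> 'a list) set" and e :: "'a list \<Rightarrow> 'a list"
  assumes finite_alphabet: "finite Al"
    and expanding: "\<And>h. h \<in> H \<Longrightarrow> expanding_map Al h"
    and group: "group (fun_monoid H e)"
begin

definition ginv :: "('a list \<Rightarrow> 'a list) \<Rightarrow> 'a list \<Rightarrow> 'a list" where
  "ginv h = inv\<^bsub>fun_monoid H e\<^esub> h"

lemma one_in_H: "e \<in> H"
  using monoid.one_closed[OF group.is_monoid[OF group]] by (simp add: fun_monoid_def)
lemma one_comp: "h \<in> H \<Longrightarrow> e \<circ> h = h"
  using monoid.l_one[OF group.is_monoid[OF group]] by (simp add: fun_monoid_def)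
lemma comp_one: "h \<in> H \<Longrightarrow> h \<circ> e = h"
  using monoid.r_one[OF group.is_monoid[OF group]] by (simp add: fun_monoid_def)
lemma ginv_in_H: "h \<in> H \<Longrightarrow> ginv h \<in> H"
  using group.inv_closed[OF group] by (simp add: fun_monoid_def ginv_def)
lemma ginv_comp: "h \<in> H \<Longrightarrow> ginv h \<circ> h = e"
  using group.l_inv[OF group] by (simp add: fun_monoid_def ginv_def)
lemma comp_ginv: "h \<in> H \<Longrightarrow> h \<circ> ginv h = e"
  using group.r_inv[OF group] by (simp add: fun_monoid_def ginv_def)

lemma expanding_append:
  "h \<in> H \<Longrightarrow> u \<in> lists Al \<Longrightarrow> v \<in> lists Al \<Longrightarrow> \<exists>z. h (u @ v) = h u @ z \<and> length v \<le> length z"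
  using expanding unfolding expanding_map_def by blast
lemma maps_lists: "h \<in> H \<Longrightarrow> w \<in> lists Al \<Longrightarrow> h w \<in> lists Al"
  using expanding unfolding expanding_map_def by blast
lemma maps_Nil: "h \<in> H \<Longrightarrow> h [] = []"
  using expanding unfolding expanding_map_def by blast
lemma fixes_outside: "h \<in> H \<Longrightarrow> w \<notin> lists Al \<Longrightarrow> h w = w"
  using expanding unfolding expanding_map_def by blast
lemma length_increasing: "h \<in> H \<Longrightarrow> w \<in> lists Al \<Longrightarrow> length w \<le> length (h w)"
  using expanding_append[of h "[]" w] maps_Nil by auto

text \<open>On e-fixed words every element of H preserves length, since its inverse in H
  cannot shorten words either; and it maps them to e-fixed words.\<close>
lemma fixed_word_action:
  assumes h: "h \<in> H" and x: "x \<in> lists Al" "e x = x"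
  shows "length (h x) = length x" "e (h x) = h x"
proof -
  have "ginv h (h x) = x" using fun_cong[OF ginv_comp[OF h], of x] x(2) by simp
  then have "length (h x) \<le> length x"
    using length_increasing[OF ginv_in_H[OF h] maps_lists[OF h x(1)]] by simp
  then show "length (h x) = length x" using length_increasing[OF h x(1)] by simp
  show "e (h x) = h x" using fun_cong[OF one_comp[OF h], of x] by simp
qed

definition fixed_prefixes :: "'a list set" where
  "fixed_prefixes = {u \<in> lists Al. \<exists>v. u @ v \<in> lists Al \<and> e (u @ v) = u @ v}"

lemma fixed_prefix_lists: "u \<in> fixed_prefixes \<Longrightarrow> u \<in> lists Al"
  unfolding fixed_prefixes_def by blast

lemma Nil_fixed_prefix: "[] \<in> fixed_prefixes"
  unfolding fixed_prefixes_def using maps_Nil[OF one_in_H] by auto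

lemma fixed_prefix_prefix: assumes "u @ v \<in> fixed_prefixes" shows "u \<in> fixed_prefixes"
proof -
  obtain w where "u @ v \<in> lists Al" "(u @ v) @ w \<in> lists Al" "e ((u @ v) @ w) = (u @ v) @ w"
    using assms unfolding fixed_prefixes_def by blast
  then have "u \<in> lists Al" "u @ (v @ w) \<in> lists Al" "e (u @ (v @ w)) = u @ (v @ w)" by simp_all
  then show ?thesis unfolding fixed_prefixes_def by blast
qed

lemma fixed_prefix_action:
  assumes h: "h \<in> H" and u: "u \<in> fixed_prefixes"
  shows "h u \<in> fixed_prefixes" "length (h u) = length u"
proof -
  obtain v where v: "u \<in> lists Al" "u @ v \<in> lists Al" "e (u @ v) = u @ v"
    using u unfolding fixed_prefixes_def by auto
  have "v \<in> lists Al" using v(2) by simp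
  then obtain z where z: "h (u @ v) = h u @ z" "length v \<le> length z"
    using expanding_append[OF h v(1)] by blast
  have fixed: "length (h (u @ v)) = length (u @ v)" "e (h (u @ v)) = h (u @ v)"
    using fixed_word_action[OF h v(2,3)] by auto
  show "length (h u) = length u" using fixed(1) length_increasing[OF h v(1)] z by simp
  show "h u \<in> fixed_prefixes"
    unfolding fixed_prefixes_def using maps_lists[OF h v(2)] fixed(2) z by auto
qed

lemma one_on_fixed_prefix: assumes u: "u \<in> fixed_prefixes" shows "e u = u"
proof -
  obtain v where v: "u \<in> lists Al" "u @ v \<in> lists Al" "e (u @ v) = u @ v"
    using u unfolding fixed_prefixes_def by auto
  have "v \<in> lists Al" using v(2) by simp
  then obtain z where "e (u @ v) = e u @ z"
    using expanding_append[OF one_in_H v(1)] by blast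
  then show ?thesis
    using v(3) fixed_prefix_action(2)[OF one_in_H u] append_eq_append_conv[of "e u" u z v] by simp
qed

lemma ginv_on_fixed_prefix: "h \<in> H \<Longrightarrow> u \<in> fixed_prefixes \<Longrightarrow> ginv h (h u) = u"
  using fun_cong[OF ginv_comp, of h u] one_on_fixed_prefix by simp

lemma fixed_prefix_child:
  assumes h: "h \<in> H" and ua: "u @ [a] \<in> fixed_prefixes"
  shows "h (u @ [a]) = h u @ [last (h (u @ [a]))]" "last (h (u @ [a])) \<in> Al"
proof -
  have u: "u \<in> fixed_prefixes" using fixed_prefix_prefix[OF ua] .
  have "u \<in> lists Al" "[a] \<in> lists Al" using fixed_prefix_lists[OF ua] by auto
  then obtain z where z: "h (u @ [a]) = h u @ z" using expanding_append[OF h] by blast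
  then have "length z = 1" using fixed_prefix_action(2)[OF h ua] fixed_prefix_action(2)[OF h u] by simp
  then obtain c where "z = [c]" by (cases z) auto
  then show "h (u @ [a]) = h u @ [last (h (u @ [a]))]" "last (h (u @ [a])) \<in> Al"
    using z fixed_prefix_lists[OF fixed_prefix_action(1)[OF h ua]] by auto
qed

text \<open>H acts faithfully on the fixed prefixes: every word w is moved by h as e w is,
  and e w is itself e-fixed.\<close>
lemma faithful_on_fixed_prefixes:
  assumes h1: "h1 \<in> H" and h2: "h2 \<in> H" and agree: "\<forall>u\<in>fixed_prefixes. h1 u = h2 u"
  shows "h1 = h2"
proof
  fix w
  show "h1 w = h2 w"
  proof (cases "w \<in> lists Al")
    case True
    have "e w \<in> lists Al" "e w @ [] \<in> lists Al" "e (e w @ []) = e w @ []"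
      using maps_lists[OF one_in_H True] fun_cong[OF comp_one[OF one_in_H], of w] by simp_all
    then have ew: "e w \<in> fixed_prefixes" unfolding fixed_prefixes_def by blast
    have "h1 w = h1 (e w)" using fun_cong[OF comp_one[OF h1], of w] by simp
    also have "\<dots> = h2 (e w)" using agree ew by simp
    also have "\<dots> = h2 w" using fun_cong[OF comp_one[OF h2], of w] by simp
    finally show ?thesis .
  qed (simp add: fixes_outside h1 h2)
qed

subsection \<open>Extending the action letter by letter\<close>

definition inner_children :: "'a list \<Rightarrow> 'a set" where
  "inner_children u = {a \<in> Al. u @ [a] \<in> fixed_prefixes}"

definition outer_children :: "'a list \<Rightarrow> 'a set" where
  "outer_children u = Al - inner_children u"

definition enum :: "'a list \<Rightarrow> 'a \<Rightarrow> nat" where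
  "enum u = (SOME t. bij_betw t (outer_children u) {0..<card (outer_children u)})"

lemma enum_bij: "bij_betw (enum u) (outer_children u) {0..<card (outer_children u)}"
proof -
  have "finite (outer_children u)" using finite_alphabet unfolding outer_children_def by simp
  then have "\<exists>t. bij_betw t (outer_children u) {0..<card (outer_children u)}"
    by (intro finite_same_card_bij) auto
  then show ?thesis unfolding enum_def by (rule someI_ex)
qed

lemma card_inner_children_le:
  assumes h: "h \<in> H" and u: "u \<in> fixed_prefixes"
  shows "card (inner_children u) \<le> card (inner_children (h u))"
proof (rule card_inj_on_le[where f="\<lambda>a. last (h (u @ [a]))"])
  show "inj_on (\<lambda>a. last (h (u @ [a]))) (inner_children u)"
  proof (rule inj_onI)
    fix a a' assume a: "a \<in> inner_children u" "a' \<in> inner_children u"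
      and eq: "last (h (u @ [a])) = last (h (u @ [a']))"
    then have "h (u @ [a]) = h (u @ [a'])"
      using fixed_prefix_child(1)[OF h] unfolding inner_children_def by (metis (no_types, lifting) mem_Collect_eq)
    then have "ginv h (h (u @ [a])) = ginv h (h (u @ [a']))" by simp
    then show "a = a'" using ginv_on_fixed_prefix[OF h] a unfolding inner_children_def by auto
  qed
  show "(\<lambda>a. last (h (u @ [a]))) ` inner_children u \<subseteq> inner_children (h u)"
  proof
    fix c assume "c \<in> (\<lambda>a. last (h (u @ [a]))) ` inner_children u"
    then obtain a where a: "u @ [a] \<in> fixed_prefixes" "c = last (h (u @ [a]))"
      unfolding inner_children_def by blast
    then show "c \<in> inner_children (h u)"
      using fixed_prefix_child[OF h a(1)] fixed_prefix_action(1)[OF h a(1)]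
      unfolding inner_children_def by simp
  qed
  show "finite (inner_children (h u))" using finite_alphabet unfolding inner_children_def by simp
qed

text \<open>Applying this to h and its inverse: u and h u have equally many outer children.\<close>
lemma card_outer_children:
  assumes h: "h \<in> H" and u: "u \<in> fixed_prefixes"
  shows "card (outer_children (h u)) = card (outer_children u)"
proof -
  have "card (inner_children (h u)) \<le> card (inner_children (ginv h (h u)))"
    by (rule card_inner_children_le[OF ginv_in_H[OF h] fixed_prefix_action(1)[OF h u]])
  then have "card (inner_children (h u)) = card (inner_children u)"
    using card_inner_children_le[OF h u] ginv_on_fixed_prefix[OF h u] by simp
  moreover have "inner_children v \<subseteq> Al" "finite (inner_children v)" for v
    using finite_alphabet unfolding inner_children_def by auto
  ultimately show ?thesis unfolding outer_children_def by (simp add: card_Diff_subset)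
qed

definition outer_perm :: "('a list \<Rightarrow> 'a list) \<Rightarrow> 'a list \<Rightarrow> 'a \<Rightarrow> 'a" where
  "outer_perm h u a = the_inv_into (outer_children (h u)) (enum (h u)) (enum u a)"

definition letter_action :: "('a list \<Rightarrow> 'a list) \<Rightarrow> 'a list \<Rightarrow> 'a \<Rightarrow> 'a" where
  "letter_action h u a = (if a \<in> inner_children u then last (h (u @ [a])) else outer_perm h u a)"

lemma outer_perm_props:
  assumes h: "h \<in> H" and u: "u \<in> fixed_prefixes" and a: "a \<in> outer_children u"
  shows "outer_perm h u a \<in> outer_children (h u)" "enum (h u) (outer_perm h u a) = enum u a"
proof -
  have t: "enum u a \<in> {0..<card (outer_children (h u))}"
    using bij_betwE[OF enum_bij] a card_outer_children[OF h u] by auto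
  then show "outer_perm h u a \<in> outer_children (h u)"
    unfolding outer_perm_def using enum_bij[of "h u"] by (metis bij_betw_def the_inv_into_into order_refl)
  show "enum (h u) (outer_perm h u a) = enum u a"
    unfolding outer_perm_def using t enum_bij[of "h u"] by (simp add: f_the_inv_into_f_bij_betw)
qed

lemma letter_action_props:
  assumes h: "h \<in> H" and u: "u \<in> fixed_prefixes" and a: "a \<in> Al"
  shows "letter_action h u a \<in> Al"
    and "letter_action h u a \<in> inner_children (h u) \<longleftrightarrow> a \<in> inner_children u"
proof -
  have "letter_action h u a \<in> Al \<and> (letter_action h u a \<in> inner_children (h u) \<longleftrightarrow> a \<in> inner_children u)"
  proof (cases "a \<in> inner_children u")
    case True
    then have ua: "u @ [a] \<in> fixed_prefixes" unfolding inner_children_def by simp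
    have "letter_action h u a = last (h (u @ [a]))" using True unfolding letter_action_def by simp
    then show ?thesis
      using True fixed_prefix_child[OF h ua] fixed_prefix_action(1)[OF h ua]
      unfolding inner_children_def by auto
  next
    case False
    then show ?thesis
      using outer_perm_props(1)[OF h u] a unfolding letter_action_def outer_children_def by auto
  qed
  then show "letter_action h u a \<in> Al"
    and "letter_action h u a \<in> inner_children (h u) \<longleftrightarrow> a \<in> inner_children u" by auto
qed

lemma letter_action_comp:
  assumes h: "h \<in> H" and g: "g \<in> H" and u: "u \<in> fixed_prefixes" and a: "a \<in> Al"
  shows "letter_action (h \<circ> g) u a = letter_action h (g u) (letter_action g u a)"
proof (cases "a \<in> inner_children u")
  case True
  then have ua: "u @ [a] \<in> fixed_prefixes" unfolding inner_children_def by simp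
  have b: "letter_action g u a \<in> inner_children (g u)" using letter_action_props(2)[OF g u a] True by simp
  have "g (u @ [a]) = g u @ [letter_action g u a]"
    using fixed_prefix_child(1)[OF g ua] True unfolding letter_action_def by simp
  then have "(h \<circ> g) (u @ [a]) = h (g u) @ [letter_action h (g u) (letter_action g u a)]"
    using fixed_prefix_child(1)[OF h, of "g u" "letter_action g u a"] b
    unfolding letter_action_def inner_children_def by auto
  then show ?thesis using True unfolding letter_action_def by simp
next
  case False
  then have aC: "a \<in> outer_children u" using a unfolding outer_children_def by simp
  have "letter_action g u a \<notin> inner_children (g u)" using letter_action_props(2)[OF g u a] False by simp
  then have "letter_action h (g u) (letter_action g u a) = outer_perm h (g u) (outer_perm g u a)"
    using False unfolding letter_action_def by simp
  also have "\<dots> = outer_perm (h \<circ> g) u a"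
    unfolding outer_perm_def[of h] using outer_perm_props(2)[OF g u aC] by (simp add: outer_perm_def)
  finally show ?thesis using False unfolding letter_action_def by simp
qed

lemma letter_action_one:
  assumes u: "u \<in> fixed_prefixes" and a: "a \<in> Al"
  shows "letter_action e u a = a"
proof (cases "a \<in> inner_children u")
  case True
  then have "u @ [a] \<in> fixed_prefixes" unfolding inner_children_def by simp
  then show ?thesis using True one_on_fixed_prefix unfolding letter_action_def by simp
next
  case False
  then have "a \<in> outer_children u" using a unfolding outer_children_def by simp
  then have "the_inv_into (outer_children u) (enum u) (enum u a) = a"
    using enum_bij[of u] by (simp add: bij_betw_def the_inv_into_f_f)
  then show ?thesis
    using False one_on_fixed_prefix[OF u] unfolding letter_action_def outer_perm_def by simp
qed

end

subsection \<open>The embedding into the automorphisms of a tree over natural numbers\<close>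

locale encoded_expanding_group = expanding_group +
  fixes enc :: "'a \<Rightarrow> nat"
  assumes enc_inj: "inj_on enc Al"
begin

definition A :: "nat set" where "A = enc ` Al"
definition dec :: "nat \<Rightarrow> 'a" where "dec = the_inv_into Al enc"

lemma dec_in: "b \<in> A \<Longrightarrow> dec b \<in> Al"
  unfolding A_def dec_def using enc_inj by (auto simp: the_inv_into_f_f)
lemma enc_dec: "b \<in> A \<Longrightarrow> enc (dec b) = b"
  unfolding A_def dec_def using enc_inj by (auto simp: the_inv_into_f_f)
lemma dec_enc: "a \<in> Al \<Longrightarrow> dec (enc a) = a"
  unfolding dec_def using enc_inj by (simp add: the_inv_into_f_f)
lemma enc_in: "a \<in> Al \<Longrightarrow> enc a \<in> A"
  unfolding A_def by simp

text \<open>The action of h on the subtree below the vertex u: follow the letter action while the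
  path stays among fixed prefixes, then copy the rest of the word.\<close>
fun extend :: "('a list \<Rightarrow> 'a list) \<Rightarrow> 'a list \<Rightarrow> nat list \<Rightarrow> nat list" where
  "extend h u [] = []"
| "extend h u (b # w) = enc (letter_action h u (dec b)) #
     (if dec b \<in> inner_children u then extend h (u @ [dec b]) w else w)"

lemma extend_lists:
  "h \<in> H \<Longrightarrow> u \<in> fixed_prefixes \<Longrightarrow> w \<in> lists A \<Longrightarrow> extend h u w \<in> lists A \<and> length (extend h u w) = length w"
proof (induction w arbitrary: u)
  case Nil then show ?case by simp
next
  case (Cons b w)
  have "dec b \<in> Al" using dec_in Cons.prems by simp
  moreover have "u @ [dec b] \<in> fixed_prefixes" if "dec b \<in> inner_children u"
    using that unfolding inner_children_def by simp
  ultimately show ?case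
    using Cons.IH[of "u @ [dec b]"] Cons.prems enc_in letter_action_props(1)[OF Cons.prems(1,2)] by auto
qed

lemma extend_append: "\<exists>r. extend h u (x @ y) = extend h u x @ r"
proof (induction x arbitrary: u)
  case Nil then show ?case by simp
next
  case (Cons b x)
  then show ?case by (cases "dec b \<in> inner_children u") auto
qed

lemma extend_comp:
  "h \<in> H \<Longrightarrow> g \<in> H \<Longrightarrow> u \<in> fixed_prefixes \<Longrightarrow> w \<in> lists A \<Longrightarrow>
     extend (h \<circ> g) u w = extend h (g u) (extend g u w)"
proof (induction w arbitrary: u)
  case Nil then show ?case by simp
next
  case (Cons b w)
  note h = Cons.prems(1) and g = Cons.prems(2) and u = Cons.prems(3)
  have a: "dec b \<in> Al" using dec_in Cons.prems by simp
  have dec_letter: "dec (enc (letter_action g u (dec b))) = letter_action g u (dec b)"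
    using dec_enc[OF letter_action_props(1)[OF g u a]] .
  have inner: "letter_action g u (dec b) \<in> inner_children (g u) \<longleftrightarrow> dec b \<in> inner_children u"
    using letter_action_props(2)[OF g u a] .
  have comp: "letter_action (h \<circ> g) u (dec b) = letter_action h (g u) (letter_action g u (dec b))"
    using letter_action_comp[OF h g u a] .
  show ?case
  proof (cases "dec b \<in> inner_children u")
    case True
    then have ua: "u @ [dec b] \<in> fixed_prefixes" unfolding inner_children_def by simp
    have "g (u @ [dec b]) = g u @ [letter_action g u (dec b)]"
      using fixed_prefix_child(1)[OF g ua] True unfolding letter_action_def by simp
    then show ?thesis
      using True Cons.IH[OF h g ua] Cons.prems dec_letter inner comp[unfolded comp_def] by simp
  next
    case False
    then show ?thesis using dec_letter inner comp[unfolded comp_def] by simp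
  qed
qed

lemma extend_one: "u \<in> fixed_prefixes \<Longrightarrow> w \<in> lists A \<Longrightarrow> extend e u w = w"
proof (induction w arbitrary: u)
  case Nil then show ?case by simp
next
  case (Cons b w)
  have "dec b \<in> Al" using dec_in Cons.prems by simp
  moreover have "u @ [dec b] \<in> fixed_prefixes" if "dec b \<in> inner_children u"
    using that unfolding inner_children_def by simp
  ultimately show ?case using Cons letter_action_one[OF Cons.prems(1)] enc_dec by auto
qed

lemma extend_on_fixed_prefix:
  "h \<in> H \<Longrightarrow> u @ v \<in> fixed_prefixes \<Longrightarrow> extend h u (map enc v) = map enc (drop (length u) (h (u @ v)))"
proof (induction v arbitrary: u)
  case Nil
  then show ?case using fixed_prefix_action(2)[OF Nil.prems(1)] by simp
next
  case (Cons a v)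
  note h = Cons.prems(1)
  have ua: "u @ [a] \<in> fixed_prefixes" using fixed_prefix_prefix[of "u @ [a]" v] Cons.prems by simp
  have a: "a \<in> Al" using fixed_prefix_lists[OF ua] by simp
  then have inner: "a \<in> inner_children u" using ua unfolding inner_children_def by simp
  have "(u @ [a]) @ v \<in> lists Al" using fixed_prefix_lists[OF Cons.prems(2)] by simp
  then obtain z where z: "h ((u @ [a]) @ v) = h (u @ [a]) @ z"
    using expanding_append[OF h, of "u @ [a]" v] by auto
  have "h (u @ [a]) = h u @ [letter_action h u a]"
    using fixed_prefix_child(1)[OF h ua] inner unfolding letter_action_def by simp
  moreover have "length (h u) = length u" using fixed_prefix_action(2)[OF h fixed_prefix_prefix[OF ua]] .
  ultimately have "drop (length u) (h (u @ a # v)) = letter_action h u a # drop (Suc (length u)) (h (u @ a # v))"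
    using z by simp
  then show ?case using Cons.IH[OF h, of "u @ [a]"] Cons.prems inner dec_enc[OF a] by simp
qed

definition embed :: "('a list \<Rightarrow> 'a list) \<Rightarrow> nat list \<Rightarrow> nat list" where
  "embed h = (\<lambda>w. if w \<in> lists A then extend h [] w else w)"

lemma embed_level_map: "h \<in> H \<Longrightarrow> level_map A (embed h)"
  unfolding level_map_def embed_def
proof (intro conjI allI impI ballI)
  fix u v assume h: "h \<in> H" and u: "u \<in> lists A" and v: "v \<in> lists A"
  obtain r where "extend h [] (u @ v) = extend h [] u @ r" using extend_append by blast
  then show "take (length u) (if u @ v \<in> lists A then extend h [] (u @ v) else u @ v)
      = (if u \<in> lists A then extend h [] u else u)"
    using u v extend_lists[OF h Nil_fixed_prefix u] by simp
qed (use extend_lists Nil_fixed_prefix in auto)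

lemma embed_comp:
  assumes h: "h \<in> H" and g: "g \<in> H" shows "embed (h \<circ> g) = embed h \<circ> embed g"
proof
  fix w
  show "embed (h \<circ> g) w = (embed h \<circ> embed g) w"
    using extend_comp[OF h g Nil_fixed_prefix] extend_lists[OF g Nil_fixed_prefix] maps_Nil[OF g]
    unfolding embed_def by auto
qed

lemma embed_one: "w \<in> lists A \<Longrightarrow> embed e w = w"
  unfolding embed_def using extend_one[OF Nil_fixed_prefix] by simp

lemma embed_tree_automorphism:
  assumes h: "h \<in> H" shows "tree_automorphism A (embed h)"
proof -
  have "embed (ginv h) (embed h w) = w \<and> embed h (embed (ginv h) w) = w"
    if w: "w \<in> lists A" for w
    using fun_cong[OF embed_comp[OF ginv_in_H[OF h] h], of w] fun_cong[OF embed_comp[OF h ginv_in_H[OF h]], of w]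
      ginv_comp[OF h] comp_ginv[OF h] embed_one[OF w] by simp
  then show ?thesis
    unfolding tree_automorphism_def using embed_level_map[OF h] embed_level_map[OF ginv_in_H[OF h]]
    by blast
qed

lemma embed_inj: "inj_on embed H"
proof (rule inj_onI)
  fix h1 h2 assume h: "h1 \<in> H" "h2 \<in> H" and eq: "embed h1 = embed h2"
  have "h1 u = h2 u" if u: "u \<in> fixed_prefixes" for u
  proof -
    have "map enc u \<in> lists A" using fixed_prefix_lists[OF u] enc_in by auto
    moreover have "extend h1 [] (map enc u) = map enc (h1 u)" "extend h2 [] (map enc u) = map enc (h2 u)"
      using extend_on_fixed_prefix[OF h(1), of "[]" u] extend_on_fixed_prefix[OF h(2), of "[]" u] u
      by simp_all
    ultimately have "map enc (h1 u) = map enc (h2 u)"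
      using fun_cong[OF eq, of "map enc u"] unfolding embed_def by simp
    moreover have "set (h1 u) \<union> set (h2 u) \<subseteq> Al"
      using fixed_prefix_lists[OF fixed_prefix_action(1)[OF h(1) u]]
        fixed_prefix_lists[OF fixed_prefix_action(1)[OF h(2) u]] by auto
    ultimately show "h1 u = h2 u" using map_inj_on inj_on_subset[OF enc_inj] by blast
  qed
  then show "h1 = h2" using faithful_on_fixed_prefixes h by blast
qed

lemma embed_hom:
  "embed \<in> hom (fun_monoid H e)
     (fun_monoid (self_similar_group A {f. tree_automorphism A f} (residual A) root_letter) id)"
  unfolding hom_def fun_monoid_def
  using tree_automorphism_in_group[OF embed_tree_automorphism] embed_comp by auto

end

theorem mainTheorem11:
  fixes Al :: "'a set" and Q :: "'q set"
    and tr :: "'q \<Rightarrow> 'a \<Rightarrow> 'q" and out :: "'q \<Rightarrow> 'a \<Rightarrow> 'a list"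
    and H :: "('a list \<Rightarrow> 'a list) set" and e :: "'a list \<Rightarrow> 'a list"
  assumes "expanding_automaton Al Q tr out"
    and "H \<subseteq> automaton_semigroup Al Q tr out"
    and "group (fun_monoid H e)"
  shows "\<exists>(Al' :: nat set) (Q' :: (nat list \<Rightarrow> nat list) set) tr' out' \<phi>.
           invertible_synchronous_automaton Al' Q' tr' out' \<and>
           \<phi> \<in> hom (fun_monoid H e) (fun_monoid (self_similar_group Al' Q' tr' out') id) \<and>
           inj_on \<phi> H"
proof -
  have fin: "finite Al" using assms(1) unfolding expanding_automaton_def by simp
  obtain enc :: "'a \<Rightarrow> nat" where enc: "inj_on enc Al"
    using finite_imp_inj_to_nat_seg[OF fin] by blast
  have "\<And>h. h \<in> H \<Longrightarrow> expanding_map Al h"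
    using assms(1,2) automaton_semigroup_expanding by blast
  then interpret encoded_expanding_group Al H e enc
    unfolding encoded_expanding_group_def expanding_group_def encoded_expanding_group_axioms_def
    using fin assms(3) enc by blast
  have "finite A" unfolding A_def using fin by simp
  then show ?thesis
    using tree_automorphism_automaton embed_hom embed_inj by (intro exI conjI)
qed

end
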